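(* Let $H$ be a real Hilbert space, let $D\subseteq H$ be a nonempty closed convex set, let $I$ be a countable set of positive integers, and let $(T_i)_{i\in I}$ be firmly nonexpansive operators $T_i:D\to D$ with $F:=\bigcap_{i\in I}\mathrm{Fix}(T_i)\neq\emptyset$. Let $(\Omega,w)\in\mathcal{M}_\infty$ and let $T:=\sum_{t\in\Omega}w(t)T[t]$ (the series converging pointwise in $H$). Then $\mathrm{Fix}(T)=\bigcap_{i\in I}\mathrm{Fix}(T_i)$.
   Context: An operator $T:D\to H$ is firmly nonexpansive if $\|T(x)-T(y)\|^2\le\langle x-y,T(x)-T(y)\rangle$ for all $x,y\in D$. $\mathrm{Fix}(T)=\{x\in D:T(x)=x\}$. An index vector is a finite tuple $t=(t_1,\dots,t_q)$ with each $t_\ell\in I$; the string operator is $T[t]:=T_{t_q}T_{t_{q-1}}\cdots T_{t_1}$. A countable set $\Omega$ of index vectors is fit if every $i\in I$ appears as a component of some $t\in\Omega$. $\mathcal{M}_\infty$ denotes the collection of all pairs $(\Omega,w)$ where $\Omega$ is a fit countable set of index vectors and $w:\Omega\to(0,1)$ satisfies $\sum_{t\in\Omega}w(t)=1$. *)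

theory Defs
  imports "HOL-Analysis.Analysis"
begin

definition firmly_nonexpansive_on :: "'a::real_inner set \<Rightarrow> ('a \<Rightarrow> 'a) \<Rightarrow> bool" where
  "firmly_nonexpansive_on D f \<longleftrightarrow>
     (\<forall>x\<in>D. \<forall>y\<in>D. (norm (f x - f y))^2 \<le> inner (x - y) (f x - f y))"

definition Fix :: "'a set \<Rightarrow> ('a \<Rightarrow> 'a) \<Rightarrow> 'a set" where
  "Fix D f = {x\<in>D. f x = x}"

text \<open>String operator T[t] = T t_q \<circ> ... \<circ> T t_1 (t_1 applied first).\<close>
fun string_op :: "(nat \<Rightarrow> 'a \<Rightarrow> 'a) \<Rightarrow> nat list \<Rightarrow> 'a \<Rightarrow> 'a" where
  "string_op T [] = id"
| "string_op T (i # ts) = string_op T ts \<circ> T i"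

text \<open>Index vectors are nonempty finite tuples with entries in I; fit; weights in (0,1) summing to 1.
  Countability of \<Omega> is automatic since nat list is a countable type.\<close>
definition M_infty :: "nat set \<Rightarrow> nat list set \<Rightarrow> (nat list \<Rightarrow> real) \<Rightarrow> bool" where
  "M_infty I \<Omega> w \<longleftrightarrow>
     countable \<Omega> \<and>
     (\<forall>t\<in>\<Omega>. t \<noteq> [] \<and> set t \<subseteq> I) \<and>
     (\<forall>i\<in>I. \<exists>t\<in>\<Omega>. i \<in> set t) \<and>
     (\<forall>t\<in>\<Omega>. 0 < w t \<and> w t < 1) \<and>
     (w has_sum 1) \<Omega>"

definition weighted_string_op ::
  "(nat \<Rightarrow> 'a::real_normed_vector \<Rightarrow> 'a) \<Rightarrow> nat list set \<Rightarrow> (nat list \<Rightarrow> real) \<Rightarrow> 'a \<Rightarrow> 'a" where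
  "weighted_string_op T \<Omega> w x = (\<Sum>\<^sub>\<infinity>t\<in>\<Omega>. w t *\<^sub>R string_op T t x)"

end

theory Submission
  imports Defs
begin

text \<open>A firmly nonexpansive map moves every point strictly closer to each of its fixed points,
  unless it fixes the point; the same then holds for finite compositions with a common fixed
  point \<open>p\<close>. If \<open>x\<close> is fixed by the average \<open>\<Sum> w(t) T[t]\<close>, then \<open>x - p\<close> is the weighted
  average of the vectors \<open>T[t] x - p\<close>, all of norm at most \<open>\<parallel>x - p\<parallel>\<close>. In a Hilbert space such an
  average has norm \<open>\<parallel>x - p\<parallel>\<close> only if all these vectors equal \<open>x - p\<close>, so every string
  operator fixes \<open>x\<close>, and hence so does each of its factors.\<close>

lemma firmly_nonexpansive_on_fixed_point_bound:
  fixes S :: "'a::real_inner \<Rightarrow> 'a"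
  assumes "firmly_nonexpansive_on D S" and "x \<in> D" and "p \<in> D" and "S p = p"
  shows "(norm (S x - x))\<^sup>2 \<le> (norm (x - p))\<^sup>2 - (norm (S x - p))\<^sup>2"
proof -
  have firm: "(norm (S x - p))\<^sup>2 \<le> inner (x - p) (S x - p)"
    using assms unfolding firmly_nonexpansive_on_def by metis
  have "S x - x = (S x - p) - (x - p)"
    by simp
  then have "(norm (S x - x))\<^sup>2 = (norm (S x - p))\<^sup>2 - 2 * inner (x - p) (S x - p) + (norm (x - p))\<^sup>2"
    by (simp add: power2_norm_eq_inner inner_diff_left inner_diff_right inner_commute)
  with firm show ?thesis
    by linarith
qed

lemma firmly_nonexpansive_on_fixed_point_dist:
  fixes S :: "'a::real_inner \<Rightarrow> 'a"
  assumes "firmly_nonexpansive_on D S" and "x \<in> D" and "p \<in> D" and "S p = p"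
  shows "norm (S x - p) \<le> norm (x - p)"
proof (rule power2_le_imp_le)
  show "(norm (S x - p))\<^sup>2 \<le> (norm (x - p))\<^sup>2"
    using firmly_nonexpansive_on_fixed_point_bound[OF assms] zero_le_power2[of "norm (S x - x)"]
    by linarith
qed simp

lemma string_op_fixed:
  assumes "\<forall>i\<in>set t. T i x = x"
  shows "string_op T t x = x"
  using assms by (induction t) auto

context
  fixes D :: "'a::real_inner set" and I :: "nat set" and T :: "nat \<Rightarrow> 'a \<Rightarrow> 'a" and p :: 'a
  assumes maps: "\<forall>i\<in>I. T i ` D \<subseteq> D"
    and firm: "\<forall>i\<in>I. firmly_nonexpansive_on D (T i)"
    and common_fixed: "p \<in> (\<Inter>i\<in>I. Fix D (T i))" and p_in: "p \<in> D"
begin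

lemma string_op_in_and_dist:
  assumes "set t \<subseteq> I" and "x \<in> D"
  shows "string_op T t x \<in> D \<and> norm (string_op T t x - p) \<le> norm (x - p)"
  using assms
proof (induction t arbitrary: x)
  case Nil
  then show ?case by simp
next
  case (Cons i t)
  then have i: "i \<in> I" and "T i x \<in> D"
    using maps by auto
  moreover have "norm (T i x - p) \<le> norm (x - p)"
    using firmly_nonexpansive_on_fixed_point_dist[of D "T i" x p] firm common_fixed p_in i Cons.prems
    by (auto simp: Fix_def)
  ultimately show ?case
    using Cons.IH[of "T i x"] Cons.prems by fastforce
qed

lemma string_op_fixed_imp_factors_fixed:
  assumes "set t \<subseteq> I" and "x \<in> D" and "string_op T t x = x"
  shows "\<forall>i\<in>set t. T i x = x"
  using assms
proof (induction t)
  case Nil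
  then show ?case by simp
next
  case (Cons i t)
  have i: "i \<in> I" and Tx: "T i x \<in> D"
    using Cons.prems maps by auto
  have "norm (x - p) = norm (string_op T t (T i x) - p)"
    using Cons.prems by simp
  also have "\<dots> \<le> norm (T i x - p)"
    using string_op_in_and_dist[OF _ Tx, of t] Cons.prems by auto
  finally have "(norm (x - p))\<^sup>2 \<le> (norm (T i x - p))\<^sup>2"
    by (simp add: power_mono)
  moreover have "(norm (T i x - x))\<^sup>2 \<le> (norm (x - p))\<^sup>2 - (norm (T i x - p))\<^sup>2"
    using firmly_nonexpansive_on_fixed_point_bound[of D "T i" x p] firm common_fixed p_in i Cons.prems
    by (auto simp: Fix_def)
  ultimately have "(norm (T i x - x))\<^sup>2 \<le> 0"
    by linarith
  then have Tix: "T i x = x"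
    by simp
  then show ?case
    using Cons by simp
qed

end

lemma has_sum_diff:
  fixes f g :: "'b \<Rightarrow> 'a::topological_ab_group_add"
  assumes "(f has_sum a) A" and "(g has_sum b) A"
  shows "((\<lambda>x. f x - g x) has_sum (a - b)) A"
proof -
  have "((\<lambda>x. - g x) has_sum - b) A"
    using assms(2) by (simp add: has_sum_uminus)
  from has_sum_add[OF assms(1) this] show ?thesis
    by simp
qed

text \<open>The library version \<open>abs_summable_summable\<close> is stated for the class \<open>banach\<close>, which the
  sort \<open>{real_inner, complete_space}\<close> of the theorem does not provide.\<close>

lemma abs_summable_summable_complete:
  fixes f :: "'a \<Rightarrow> 'b::{real_normed_vector, complete_space}"
  assumes "f abs_summable_on A"
  shows "f summable_on A"
proof -
  obtain S where S: "((\<lambda>x. norm (f x)) has_sum S) A"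
    using assms summable_on_def by blast
  have tail: "\<exists>F0. finite F0 \<and> F0 \<subseteq> A \<and>
      (\<forall>F. finite F \<and> F0 \<subseteq> F \<and> F \<subseteq> A \<longrightarrow> norm (sum f F - sum f F0) < e)"
    if "e > 0" for e
  proof -
    obtain F0 where F0: "finite F0" "F0 \<subseteq> A" "dist (\<Sum>x\<in>F0. norm (f x)) S \<le> e / 2"
      using has_sum_finite_approximation[OF S, of "e / 2"] \<open>e > 0\<close> by auto
    have "norm (sum f F - sum f F0) < e" if F: "finite F" "F0 \<subseteq> F" "F \<subseteq> A" for F
    proof -
      have "norm (sum f F - sum f F0) = norm (sum f (F - F0))"
        using F by (simp add: sum_diff)
      also have "\<dots> \<le> (\<Sum>x\<in>F - F0. norm (f x))"
        by (rule norm_sum)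
      also have "\<dots> = (\<Sum>x\<in>F. norm (f x)) - (\<Sum>x\<in>F0. norm (f x))"
        using F by (simp add: sum_diff)
      finally have "norm (sum f F - sum f F0) \<le> (\<Sum>x\<in>F. norm (f x)) - (\<Sum>x\<in>F0. norm (f x))" .
      moreover have "(\<Sum>x\<in>F. norm (f x)) \<le> S"
        using F by (intro finite_sum_le_has_sum[OF S]) auto
      moreover have "S - (\<Sum>x\<in>F0. norm (f x)) \<le> e / 2"
        using F0(3) unfolding dist_real_def by linarith
      ultimately show ?thesis
        using \<open>e > 0\<close> by linarith
    qed
    with F0 show ?thesis by blast
  qed
  have cauchy: "cauchy_filter (filtermap (sum f) (finite_subsets_at_top A))"
    unfolding cauchy_filter_metric_filtermap
  proof (intro allI impI)
    fix e :: real assume "e > 0"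
    then obtain F0 where F0: "finite F0" "F0 \<subseteq> A"
      and small: "\<And>F. finite F \<Longrightarrow> F0 \<subseteq> F \<Longrightarrow> F \<subseteq> A \<Longrightarrow> norm (sum f F - sum f F0) < e / 2"
      using tail[of "e / 2"] by auto
    let ?P = "\<lambda>F. finite F \<and> F0 \<subseteq> F \<and> F \<subseteq> A"
    have "eventually ?P (finite_subsets_at_top A)"
      using F0 by (auto simp: eventually_finite_subsets_at_top)
    moreover have "dist (sum f F) (sum f F') < e" if "?P F" "?P F'" for F F'
    proof -
      have "dist (sum f F) (sum f F') = norm ((sum f F - sum f F0) - (sum f F' - sum f F0))"
        by (simp add: dist_norm)
      also have "\<dots> \<le> norm (sum f F - sum f F0) + norm (sum f F' - sum f F0)"
        by (rule norm_triangle_ineq4)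
      also have "\<dots> < e / 2 + e / 2"
        using small that by (intro add_strict_mono) auto
      finally show ?thesis
        by simp
    qed
    ultimately show "\<exists>P. eventually P (finite_subsets_at_top A) \<and>
        (\<forall>F F'. P F \<and> P F' \<longrightarrow> dist (sum f F) (sum f F') < e)"
      by (intro exI[of _ ?P]) auto
  qed
  obtain L where "filtermap (sum f) (finite_subsets_at_top A) \<le> nhds L"
    using cauchy_filter_convergent[OF cauchy] by (auto simp: convergent_filter_iff)
  then show ?thesis
    by (auto simp: summable_on_def has_sum_def filterlim_def)
qed

lemma summable_on_scaleR_bounded:
  fixes y :: "'b \<Rightarrow> 'a::{real_normed_vector, complete_space}"
  assumes "w summable_on A" and "\<forall>t\<in>A. 0 \<le> w t" and "\<forall>t\<in>A. norm (y t) \<le> B"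
  shows "(\<lambda>t. w t *\<^sub>R y t) summable_on A"
proof (rule abs_summable_summable_complete)
  show "(\<lambda>t. w t *\<^sub>R y t) abs_summable_on A"
  proof (rule Infinite_Sum.abs_summable_on_comparison_test')
    show "(\<lambda>t. w t * B) summable_on A"
      using assms(1) by (rule summable_on_cmult_left)
    show "norm (w t *\<^sub>R y t) \<le> w t * B" if "t \<in> A" for t
      using assms(2,3) that by (simp add: mult_left_mono)
  qed
qed

lemma has_sum_average_in_cball_eq:
  fixes y :: "'b \<Rightarrow> 'a::real_inner"
  assumes w: "(w has_sum 1) \<Omega>" and pos: "\<forall>t\<in>\<Omega>. 0 < w t"
    and near: "\<forall>t\<in>\<Omega>. norm (y t - p) \<le> norm (x - p)"
    and avg: "((\<lambda>t. w t *\<^sub>R y t) has_sum x) \<Omega>"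
  shows "\<forall>t\<in>\<Omega>. y t = x"
proof
  fix t assume t: "t \<in> \<Omega>"
  define a where "a = x - p"
  have "((\<lambda>t. w t *\<^sub>R p) has_sum p) \<Omega>"
    using has_sum_bounded_linear[OF bounded_linear_scaleR_left w, of p] by simp
  from has_sum_diff[OF avg this]
  have "((\<lambda>t. w t *\<^sub>R (y t - p)) has_sum a) \<Omega>"
    by (simp add: a_def scaleR_diff_right)
  from has_sum_bounded_linear[OF bounded_linear_inner_left this, of a]
  have "((\<lambda>t. w t * inner (y t - p) a) has_sum inner a a) \<Omega>"
    by simp
  from has_sum_diff[OF has_sum_cmult_left[OF w, of "inner a a"] this]
  have excess: "((\<lambda>t. w t * (inner a a - inner (y t - p) a)) has_sum 0) \<Omega>"
    by (simp add: algebra_simps)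
  have nonneg: "0 \<le> inner a a - inner (y s - p) a" if "s \<in> \<Omega>" for s
  proof -
    have "inner (y s - p) a \<le> norm (y s - p) * norm a"
      by (rule norm_cauchy_schwarz)
    also have "\<dots> \<le> norm a * norm a"
      using near that by (simp add: a_def mult_right_mono)
    finally show ?thesis
      by (simp add: power2_norm_eq_inner[symmetric] power2_eq_square)
  qed
  have "w t * (inner a a - inner (y t - p) a) = 0"
    using nonneg_has_sum_le_0D[OF excess order_refl _ t] nonneg pos by (simp add: less_imp_le)
  then have orth: "inner (y t - p) a = inner a a"
    using pos t by auto
  have "(norm (y t - x))\<^sup>2 = (norm (y t - p))\<^sup>2 - 2 * inner (y t - p) a + (norm a)\<^sup>2"
    unfolding a_def power2_norm_eq_inner by (simp add: inner_diff_left inner_diff_right inner_commute)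
  also have "\<dots> = (norm (y t - p))\<^sup>2 - (norm a)\<^sup>2"
    using orth by (simp add: power2_norm_eq_inner)
  also have "\<dots> \<le> 0"
    using near t by (simp add: a_def power_mono)
  finally show "y t = x"
    by simp
qed

lemma common_fixed_imp_weighted_string_op_fixed:
  fixes T :: "nat \<Rightarrow> 'a::real_normed_vector \<Rightarrow> 'a"
  assumes "\<forall>i\<in>I. T i x = x" and "\<forall>t\<in>\<Omega>. set t \<subseteq> I" and "(w has_sum 1) \<Omega>"
  shows "weighted_string_op T \<Omega> w x = x"
proof -
  have "weighted_string_op T \<Omega> w x = (\<Sum>\<^sub>\<infinity>t\<in>\<Omega>. w t *\<^sub>R x)"
    unfolding weighted_string_op_def
    using assms(1,2) by (intro infsum_cong) (auto intro: string_op_fixed)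
  also have "\<dots> = x"
    using infsumI[OF has_sum_bounded_linear[OF bounded_linear_scaleR_left assms(3), of x]] by simp
  finally show ?thesis .
qed

lemma weighted_string_op_fixed_imp_common_fixed:
  fixes D :: "'a::{real_inner, complete_space} set" and T :: "nat \<Rightarrow> 'a \<Rightarrow> 'a"
  assumes maps: "\<forall>i\<in>I. T i ` D \<subseteq> D"
    and firm: "\<forall>i\<in>I. firmly_nonexpansive_on D (T i)"
    and p: "p \<in> (\<Inter>i\<in>I. Fix D (T i))" "p \<in> D"
    and strings: "\<forall>t\<in>\<Omega>. set t \<subseteq> I" and fit: "\<forall>i\<in>I. \<exists>t\<in>\<Omega>. i \<in> set t"
    and pos: "\<forall>t\<in>\<Omega>. 0 < w t" and w: "(w has_sum 1) \<Omega>"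
    and x: "x \<in> Fix D (weighted_string_op T \<Omega> w)"
  shows "x \<in> (\<Inter>i\<in>I. Fix D (T i))"
proof -
  have xD: "x \<in> D" and avg_x: "(\<Sum>\<^sub>\<infinity>t\<in>\<Omega>. w t *\<^sub>R string_op T t x) = x"
    using x unfolding Fix_def weighted_string_op_def by auto
  have near: "\<forall>t\<in>\<Omega>. norm (string_op T t x - p) \<le> norm (x - p)"
    using string_op_in_and_dist[OF maps firm p] strings xD by blast
  have "norm (string_op T t x) \<le> norm (x - p) + norm p" if "t \<in> \<Omega>" for t
    using near that norm_triangle_sub[of "string_op T t x" p] by auto
  then have "(\<lambda>t. w t *\<^sub>R string_op T t x) summable_on \<Omega>"
    using w pos by (intro summable_on_scaleR_bounded) (auto simp: summable_on_def less_imp_le)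
  then have "((\<lambda>t. w t *\<^sub>R string_op T t x) has_sum x) \<Omega>"
    using avg_x has_sum_infsum by metis
  then have strings_fix_x: "\<forall>t\<in>\<Omega>. string_op T t x = x"
    using has_sum_average_in_cball_eq[OF w pos near] by blast
  have "T i x = x" if "i \<in> I" for i
  proof -
    obtain t where "t \<in> \<Omega>" and "i \<in> set t"
      using fit \<open>i \<in> I\<close> by blast
    then show ?thesis
      using string_op_fixed_imp_factors_fixed[OF maps firm p, of t x] strings strings_fix_x xD by auto
  qed
  with xD show ?thesis
    by (simp add: Fix_def)
qed

theorem lemma3:
  fixes D :: "'a::{real_inner, complete_space} set"
    and I :: "nat set"
    and T :: "nat \<Rightarrow> 'a \<Rightarrow> 'a"
    and \<Omega> :: "nat list set"
    and w :: "nat list \<Rightarrow> real"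
  assumes "D \<noteq> {}" and "closed D" and "convex D"
    and "countable I" and "\<forall>i\<in>I. 0 < i"
    and maps: "\<forall>i\<in>I. T i ` D \<subseteq> D"
    and firm: "\<forall>i\<in>I. firmly_nonexpansive_on D (T i)"
    and F: "(\<Inter>i\<in>I. Fix D (T i)) \<noteq> {}"
    and M: "M_infty I \<Omega> w"
  shows "Fix D (weighted_string_op T \<Omega> w) = (\<Inter>i\<in>I. Fix D (T i))"
proof -
  have strings: "\<forall>t\<in>\<Omega>. set t \<subseteq> I" and nonempty: "\<forall>t\<in>\<Omega>. t \<noteq> []"
    and fit: "\<forall>i\<in>I. \<exists>t\<in>\<Omega>. i \<in> set t" and pos: "\<forall>t\<in>\<Omega>. 0 < w t" and w: "(w has_sum 1) \<Omega>"
    using M unfolding M_infty_def by auto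
  have "\<Omega> \<noteq> {}"
  proof
    assume "\<Omega> = {}"
    then have "(w has_sum 0) \<Omega>"
      by simp
    then show False
      using has_sum_unique[OF w, of 0] by simp
  qed
  then have "I \<noteq> {}"
    using strings nonempty by fastforce
  then have common_in_D: "(\<Inter>i\<in>I. Fix D (T i)) \<subseteq> D"
    by (auto simp: Fix_def)
  obtain p where p: "p \<in> (\<Inter>i\<in>I. Fix D (T i))"
    using F by auto
  show ?thesis
  proof (intro equalityI subsetI)
    fix x assume "x \<in> Fix D (weighted_string_op T \<Omega> w)"
    then show "x \<in> (\<Inter>i\<in>I. Fix D (T i))"
      using weighted_string_op_fixed_imp_common_fixed[OF maps firm p _ strings fit pos w] p common_in_D
      by blast
  next
    fix x assume "x \<in> (\<Inter>i\<in>I. Fix D (T i))"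
    with common_in_D strings w show "x \<in> Fix D (weighted_string_op T \<Omega> w)"
      using common_fixed_imp_weighted_string_op_fixed[of I T x \<Omega> w] by (auto simp: Fix_def)
  qed
qed

end
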